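(* Let $0<p<p_0<1$, let $A,B>0$ be constants and let $x_{\mathrm{home}}\in\mathbb{Z}^2$ be fixed. Consider the guided random walk following the sweeping strategy with parameters $A,B,p_0$, and suppose a phase starts at time $t>0$. Conditioned on the position $X_t$ of the agent at the beginning of the phase lying in the box $[-A\sqrt t, A\sqrt t]\times[-B\sqrt t,B\sqrt t]$, with probability at least $\frac{1-o(1)}{G}$ the agent visits $x_{\mathrm{home}}$ at some time step during the phase, where $G=\lceil \frac{1}{1-p_0}\frac{\sqrt t}{\ln t}\rceil$ and $o(1)\to0$ as $t\to\infty$.
   Context: The guided random walk with error probability $p$ following instructions $(x_t)_{t\ge0}$ (a nearest-neighbour walk in $\mathbb{Z}^2$, $x_0=0$) is the process $(X_t)$ with $X_0=0$ and independent increments, $X_{t+1}-X_t = x_{t+1}-x_t$ with probability $1-p$, and uniform on $\{(\pm1,0),(0,\pm1)\}$ with probability $p$. The sweeping strategy consists of consecutive phases; each phase starts at a time $t$ with $x_t = 0$. For a phase starting at time $t$ set $W=\lceil \frac{1}{1-p_0}A\sqrt t\rceil$, $H=\lceil\frac{1}{1-p_0}B\sqrt t\rceil$, $G=\lceil\frac{1}{1-p_0}\frac{\sqrt t}{\ln t}\rceil$, $N=\lceil 2H/G\rceil$, and give the instructions: (1) move $W$ steps west and $H$ steps south (to $(-W,-H)$); (2) move $Z$ steps north, where $Z$ is uniform on $\{0,1,\dots,G+\lceil t^{1/3}\rceil\}$, independent of everything else; (3) trace $N$ horizontal lines by alternately moving $2W$ steps east, $G$ steps north, $2W$ steps west, $G$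 steps north, and so on; (4) move $G+\lceil t^{1/3}\rceil - Z$ steps north, then return to $(0,0)$. The next phase starts when this one ends. *)

theory Defs
  imports "HOL-Probability.Probability"
begin

definition sweep_W :: "real \<Rightarrow> real \<Rightarrow> nat \<Rightarrow> nat" where
  "sweep_W p0 A t = nat \<lceil>(1 / (1 - p0)) * A * sqrt (real t)\<rceil>"

definition sweep_H :: "real \<Rightarrow> real \<Rightarrow> nat \<Rightarrow> nat" where
  "sweep_H p0 B t = nat \<lceil>(1 / (1 - p0)) * B * sqrt (real t)\<rceil>"

definition sweep_G :: "real \<Rightarrow> nat \<Rightarrow> nat" where
  "sweep_G p0 t = nat \<lceil>(1 / (1 - p0)) * (sqrt (real t) / ln (real t))\<rceil>"

definition sweep_N :: "real \<Rightarrow> real \<Rightarrow> nat \<Rightarrow> nat" where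
  "sweep_N p0 B t = nat \<lceil>2 * real (sweep_H p0 B t) / real (sweep_G p0 t)\<rceil>"

definition sweep_c :: "nat \<Rightarrow> nat" where
  "sweep_c t = nat \<lceil>real t powr (1/3)\<rceil>"

definition go_to :: "int \<times> int \<Rightarrow> int \<times> int \<Rightarrow> (int \<times> int) list" where
  "go_to a b = (let dx = fst b - fst a; dy = snd b - snd a in
      replicate (nat \<bar>dx\<bar>) (sgn dx, 0) @ replicate (nat \<bar>dy\<bar>) (0, sgn dy))"

text \<open>The list of instruction increments x_{s+1}-x_s of the phase starting at time t,
  given the value z of the random variable Z.\<close>
definition phase_instr :: "real \<Rightarrow> real \<Rightarrow> real \<Rightarrow> nat \<Rightarrow> nat \<Rightarrow> (int \<times> int) list" where
  "phase_instr p0 A B t z =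
    (let W = sweep_W p0 A t; H = sweep_H p0 B t; G = sweep_G p0 t; N = sweep_N p0 B t;
         c = sweep_c t;
         part1 = replicate W (-1, 0) @ replicate H (0, -1);
         part2 = replicate z (0, 1);
         part3 = concat (map (\<lambda>i. replicate (2 * W) (if even i then (1, 0) else (-1, 0))
                                   @ (if i + 1 < N then replicate G (0, 1) else [])) [0..<N]);
         part4 = replicate (G + c - z) (0, 1);
         pre = part1 @ part2 @ part3 @ part4
     in pre @ go_to (sum_list pre) (0, 0))"

definition unit_dirs :: "(int \<times> int) set" where
  "unit_dirs = {(1, 0), (-1, 0), (0, 1), (0, -1)}"

definition step_pmf :: "real \<Rightarrow> int \<times> int \<Rightarrow> (int \<times> int) pmf" where
  "step_pmf p d = bind_pmf (bernoulli_pmf p)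
     (\<lambda>err. if err then pmf_of_set unit_dirs else return_pmf d)"

primrec incr_pmf :: "real \<Rightarrow> (int \<times> int) list \<Rightarrow> (int \<times> int) list pmf" where
  "incr_pmf p [] = return_pmf []"
| "incr_pmf p (d # ds) = bind_pmf (step_pmf p d) (\<lambda>e. map_pmf (Cons e) (incr_pmf p ds))"

definition phase_pmf :: "real \<Rightarrow> real \<Rightarrow> real \<Rightarrow> real \<Rightarrow> nat \<Rightarrow> (int \<times> int) list pmf" where
  "phase_pmf p p0 A B t =
     bind_pmf (pmf_of_set {0 .. sweep_G p0 t + sweep_c t}) (\<lambda>z. incr_pmf p (phase_instr p0 A B t z))"

text \<open>Starting at y, the walk with increments es visits x at some time of the phase
  (times t, t+1, ..., t + length es).\<close>
definition visits :: "int \<times> int \<Rightarrow> int \<times> int \<Rightarrow> (int \<times> int) list \<Rightarrow> bool" where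
  "visits y x es = (\<exists>k \<le> length es. y + sum_list (take k es) = x)"

end

theory Submission
  imports Defs "HOL-Analysis.Fashoda_Theorem" "HOL-Real_Asymp.Real_Asymp"
begin

text \<open>During a phase the walk follows its instructions with drift factor \<open>1 - p\<close> plus a noise of order
  the square root of the elapsed time. By Hoeffding's lemma and a union bound over all prefixes and
  directions, with probability \<open>1 - o(1)\<close> every prefix of each part of the phase stays within
  \<open>\<eta> = (1 - p) t^(1/3) / 4\<close> of the correspondingly scaled instruction path. Couple all values of the
  uniform shift \<open>Z\<close> through the same noise. On the good event the sweep lines, \<open>G\<close> apart, pass
  below and above \<open>x_home\<close> with room to spare, and a discrete Fashoda argument shows that some
  shift \<open>z \<le> G + \<lceil>t^(1/3)\<rceil>\<close> makes the walk visit \<open>x_home\<close>. Averaging over \<open>Z\<close> gives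
  probability at least \<open>(1 - o(1)) / (G + \<lceil>t^(1/3)\<rceil> + 1) = (1 - o(1)) / G\<close>.\<close>

section \<open>Walk increments\<close>

definition dot_int :: "int \<times> int \<Rightarrow> int \<times> int \<Rightarrow> int" where
  "dot_int v e = fst v * fst e + snd v * snd e"

lemma dot_int_add: "dot_int v (a + b) = dot_int v a + dot_int v b"
  by (simp add: dot_int_def algebra_simps)

lemma dot_int_zero [simp]: "dot_int v 0 = 0"
  by (simp add: dot_int_def)

lemma dot_int_unit_dirs:
  "dot_int (1, 0) x = fst x" "dot_int (-1, 0) x = - fst x" "dot_int (0, 1) x = snd x" "dot_int (0, -1) x = - snd x"
  by (auto simp: dot_int_def)

lemma unit_dirs_mem: "(1, 0) \<in> unit_dirs" "(-1, 0) \<in> unit_dirs" "(0, 1) \<in> unit_dirs" "(0, -1) \<in> unit_dirs"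
  by (auto simp: unit_dirs_def)

lemma finite_unit_dirs: "finite unit_dirs" and unit_dirs_nonempty: "unit_dirs \<noteq> {}"
  and card_unit_dirs: "card unit_dirs = 4"
  by (auto simp: unit_dirs_def)

lemma unit_dirs_abs_le: "d \<in> unit_dirs \<Longrightarrow> \<bar>fst d\<bar> \<le> 1 \<and> \<bar>snd d\<bar> \<le> 1"
  and unit_dirs_uminus: "d \<in> unit_dirs \<Longrightarrow> - d \<in> unit_dirs"
  by (auto simp: unit_dirs_def)

lemma sum_dot_int_unit_dirs: "(\<Sum>u\<in>unit_dirs. dot_int v u) = 0"
  by (simp add: unit_dirs_def dot_int_def)

lemma dot_int_unit_dirs_abs_le: "v \<in> unit_dirs \<Longrightarrow> u \<in> unit_dirs \<Longrightarrow> \<bar>dot_int v u\<bar> \<le> 1"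
  by (auto simp: unit_dirs_def dot_int_def)

lemma sum_list_replicate_pair: "sum_list (replicate m (a, b)) = (int m * a, int m * b)"
  by (induction m) (auto simp: algebra_simps zero_prod_def)

lemma sum_list_take_Suc_diff:
  "n < length (xs :: (int \<times> int) list) \<Longrightarrow> sum_list (take (Suc n) xs) - sum_list (take n xs) = xs ! n"
  by (simp add: take_Suc_conv_app_nth)

lemma abs_fst_sum_list_le:
  "set xs \<subseteq> unit_dirs \<Longrightarrow> \<bar>fst (sum_list xs)\<bar> \<le> int (length xs)"
proof (induction xs)
  case (Cons a xs)
  then show ?case using unit_dirs_abs_le[of a] by auto
qed simp

lemma incr_pmf_append:
  "incr_pmf p (xs @ ys) = map_pmf (\<lambda>(a, b). a @ b) (pair_pmf (incr_pmf p xs) (incr_pmf p ys))"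
proof (induction xs)
  case Nil
  show ?case by (simp add: pair_return_pmf1 map_pmf_comp)
next
  case (Cons d xs)
  show ?case
    by (simp add: Cons.IH pair_pmf_def map_pmf_def bind_assoc_pmf bind_return_pmf)
qed

lemma map_pmf_take_incr_pmf: "map_pmf (take k) (incr_pmf p ds) = incr_pmf p (take k ds)"
proof (induction ds arbitrary: k)
  case (Cons d ds)
  then show ?case
    by (cases k) (simp_all add: map_pmf_const map_bind_pmf map_pmf_comp flip: Cons.IH)
qed simp

lemma set_pmf_step_pmf: "set_pmf (step_pmf p d) \<subseteq> insert d unit_dirs"
  unfolding step_pmf_def
  by (auto simp: set_bind_pmf finite_unit_dirs unit_dirs_nonempty split: if_splits)

lemma set_pmf_incr_pmf:
  assumes "set ds \<subseteq> unit_dirs" "es \<in> set_pmf (incr_pmf p ds)"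
  shows "length es = length ds \<and> set es \<subseteq> unit_dirs"
  using assms
proof (induction ds arbitrary: es)
  case (Cons d ds)
  from Cons.prems(2) obtain e es' where "e \<in> set_pmf (step_pmf p d)"
    and "es' \<in> set_pmf (incr_pmf p ds)" and "es = e # es'"
    by (auto simp: set_bind_pmf)
  with Cons set_pmf_step_pmf[of p d] show ?case by auto
qed simp

section \<open>Concentration of the guided walk\<close>

lemma expectation_step_pmf_dot_int:
  assumes "0 \<le> p" "p \<le> 1"
  shows "measure_pmf.expectation (step_pmf p d) (\<lambda>e. real_of_int (dot_int v e))
           = (1 - p) * real_of_int (dot_int v d)"
proof -
  have "measure_pmf.expectation (pmf_of_set unit_dirs) (\<lambda>e. real_of_int (dot_int v e)) = 0"
    by (simp add: integral_pmf_of_set finite_unit_dirs unit_dirs_nonempty sum_dot_int_unit_dirs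
        flip: of_int_sum)
  then show ?thesis
    using assms unfolding step_pmf_def
    by (subst pmf_expectation_bind[of UNIV]) (auto simp: UNIV_bool finite_unit_dirs unit_dirs_nonempty)
qed

lemma step_pmf_mgf_le:
  assumes "0 \<le> p" "p \<le> 1" "0 < l" "v \<in> unit_dirs" "d \<in> unit_dirs"
  shows "(\<integral>\<^sup>+e. exp (l * (real_of_int (dot_int v e) - (1 - p) * real_of_int (dot_int v d))) \<partial>step_pmf p d)
           \<le> exp (l\<^sup>2 / 2)"
proof -
  interpret interval_bounded_random_variable "measure_pmf (step_pmf p d)"
    "\<lambda>e. real_of_int (dot_int v e)" "-1" 1
  proof
    show "AE e in measure_pmf (step_pmf p d). real_of_int (dot_int v e) \<in> {-1..1}"
    proof (rule AE_pmfI)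
      fix e assume "e \<in> set_pmf (step_pmf p d)"
      then have "\<bar>dot_int v e\<bar> \<le> 1"
        using assms(4,5) set_pmf_step_pmf[of p d] by (auto intro: dot_int_unit_dirs_abs_le)
      then show "real_of_int (dot_int v e) \<in> {-1..1}" by (simp add: abs_le_iff)
    qed
  qed simp
  show ?thesis
    using Hoeffdings_lemma_nn_integral[OF assms(3)]
    by (simp add: expectation_step_pmf_dot_int assms(1,2) power2_eq_square)
qed

definition deviation :: "real \<Rightarrow> int \<times> int \<Rightarrow> (int \<times> int) list \<Rightarrow> (int \<times> int) list \<Rightarrow> real" where
  "deviation \<mu> v ds es = real_of_int (dot_int v (sum_list es)) - \<mu> * real_of_int (dot_int v (sum_list ds))"

lemma incr_pmf_mgf_le:
  assumes p: "0 \<le> p" "p \<le> 1" and "0 < l" "v \<in> unit_dirs" "set ds \<subseteq> unit_dirs"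
  shows "(\<integral>\<^sup>+es. exp (l * deviation (1 - p) v ds es) \<partial>incr_pmf p ds) \<le> exp (l\<^sup>2 * length ds / 2)"
  using assms(5)
proof (induction ds)
  case Nil
  then show ?case by (simp add: deviation_def)
next
  case (Cons d ds)
  define X where "X es = exp (l * deviation (1 - p) v ds es)" for es
  define Y where "Y e = exp (l * (real_of_int (dot_int v e) - (1 - p) * real_of_int (dot_int v d)))" for e
  have "(\<integral>\<^sup>+es. exp (l * deviation (1 - p) v (d # ds) es) \<partial>incr_pmf p (d # ds))
      = (\<integral>\<^sup>+e. (\<integral>\<^sup>+es. ennreal (Y e) * ennreal (X es) \<partial>incr_pmf p ds) \<partial>step_pmf p d)"
    by (simp add: X_def Y_def deviation_def dot_int_add nn_integral_map_pmf algebra_simps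
        flip: exp_add ennreal_mult)
  also have "\<dots> = (\<integral>\<^sup>+e. ennreal (Y e) * (\<integral>\<^sup>+es. ennreal (X es) \<partial>incr_pmf p ds) \<partial>step_pmf p d)"
    by (subst nn_integral_cmult) auto
  also have "\<dots> \<le> (\<integral>\<^sup>+e. ennreal (Y e) * exp (l\<^sup>2 * length ds / 2) \<partial>step_pmf p d)"
    using Cons by (intro nn_integral_mono mult_left_mono) (auto simp: X_def)
  also have "\<dots> = (\<integral>\<^sup>+e. ennreal (Y e) \<partial>step_pmf p d) * exp (l\<^sup>2 * length ds / 2)"
    by (subst nn_integral_multc) auto
  also have "\<dots> \<le> ennreal (exp (l\<^sup>2 / 2)) * exp (l\<^sup>2 * length ds / 2)"
    using Cons.prems step_pmf_mgf_le[OF p assms(3,4)] unfolding Y_def by (intro mult_right_mono) auto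
  also have "\<dots> = exp (l\<^sup>2 * length (d # ds) / 2)"
    by (simp add: algebra_simps add_divide_distrib flip: ennreal_mult exp_add)
  finally show ?case .
qed

lemma prob_deviation_ge_le:
  assumes p: "0 \<le> p" "p \<le> 1" and l: "0 < l" and "v \<in> unit_dirs" "set ds \<subseteq> unit_dirs"
  shows "measure_pmf.prob (incr_pmf p ds) {es. a \<le> deviation (1 - p) v ds es}
           \<le> exp (- l * a + l\<^sup>2 * length ds / 2)"
proof -
  let ?M = "measure_pmf (incr_pmf p ds)"
  have "emeasure ?M {es \<in> space ?M. a \<le> deviation (1 - p) v ds es}
      \<le> exp (- l * a) * (\<integral>\<^sup>+es. ennreal (exp (l * deviation (1 - p) v ds es)) * indicator (space ?M) es \<partial>?M)"
    by (rule Chernoff_ineq_nn_integral_ge) (use l in auto)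
  also have "\<dots> \<le> ennreal (exp (- l * a)) * exp (l\<^sup>2 * length ds / 2)"
    using incr_pmf_mgf_le[OF p l assms(4,5)] by (simp add: mult_left_mono)
  finally show ?thesis
    by (simp add: measure_pmf.emeasure_eq_measure mult_exp_exp flip: ennreal_mult)
qed

definition tracks :: "real \<Rightarrow> real \<Rightarrow> (int \<times> int) list \<Rightarrow> (int \<times> int) list \<Rightarrow> bool" where
  "tracks \<mu> \<eta> ds es \<longleftrightarrow> (\<forall>j \<le> length ds. \<forall>v \<in> unit_dirs. deviation \<mu> v (take j ds) (take j es) < \<eta>)"

lemma tracksD:
  assumes "tracks \<mu> \<eta> ds es" "j \<le> length ds"
  shows "\<bar>real_of_int (fst (sum_list (take j es))) - \<mu> * real_of_int (fst (sum_list (take j ds)))\<bar> < \<eta>"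
    and "\<bar>real_of_int (snd (sum_list (take j es))) - \<mu> * real_of_int (snd (sum_list (take j ds)))\<bar> < \<eta>"
  using assms unit_dirs_mem unfolding tracks_def deviation_def
  by (fastforce simp: dot_int_unit_dirs abs_less_iff)+

lemma tracks_pos: "tracks \<mu> \<eta> ds es \<Longrightarrow> 0 < \<eta>"
  using unit_dirs_mem(1) by (fastforce simp: tracks_def deviation_def)

lemma prob_not_tracks_le:
  fixes \<eta> L :: real
  assumes p: "0 \<le> p" "p \<le> 1" and ds: "set ds \<subseteq> unit_dirs" and "0 < \<eta>" "0 < L" "length ds \<le> L"
  shows "measure_pmf.prob (incr_pmf p ds) {es. \<not> tracks (1 - p) \<eta> ds es}
           \<le> 4 * (length ds + 1) * exp (- \<eta>\<^sup>2 / (2 * L))"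
proof -
  define l where "l = \<eta> / L"
  have l: "0 < l" using assms by (simp add: l_def)
  have tail: "measure_pmf.prob (incr_pmf p ds) {es. \<eta> \<le> deviation (1 - p) v (take j ds) (take j es)}
      \<le> exp (- \<eta>\<^sup>2 / (2 * L))" if "v \<in> unit_dirs" for v j
  proof -
    have "measure_pmf.prob (incr_pmf p ds) {es. \<eta> \<le> deviation (1 - p) v (take j ds) (take j es)}
        = measure_pmf.prob (incr_pmf p (take j ds)) {es. \<eta> \<le> deviation (1 - p) v (take j ds) es}"
      by (simp add: vimage_def flip: map_pmf_take_incr_pmf)
    also have "\<dots> \<le> exp (- l * \<eta> + l\<^sup>2 * length (take j ds) / 2)"
      using ds by (intro prob_deviation_ge_le[OF p l that]) (meson order.trans set_take_subset)
    also have "\<dots> \<le> exp (- l * \<eta> + l\<^sup>2 * L / 2)"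
      using assms by (auto intro!: divide_right_mono mult_left_mono)
    also have "\<dots> = exp (- \<eta>\<^sup>2 / (2 * L))"
      using assms by (simp add: l_def field_simps power2_eq_square)
    finally show ?thesis .
  qed
  define bad where "bad = (\<lambda>(j, v). {es. \<eta> \<le> deviation (1 - p) v (take j ds) (take j es)})"
  have "measure_pmf.prob (incr_pmf p ds) {es. \<not> tracks (1 - p) \<eta> ds es}
      \<le> measure_pmf.prob (incr_pmf p ds) (\<Union>jv\<in>{0..length ds} \<times> unit_dirs. bad jv)"
    by (rule measure_pmf.finite_measure_mono) (fastforce simp: bad_def tracks_def not_less, simp)
  also have "\<dots> \<le> (\<Sum>jv\<in>{0..length ds} \<times> unit_dirs. measure_pmf.prob (incr_pmf p ds) (bad jv))"
    by (rule measure_pmf.finite_measure_subadditive_finite) (auto simp: finite_unit_dirs)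
  also have "\<dots> \<le> (\<Sum>jv\<in>{0..length ds} \<times> unit_dirs. exp (- \<eta>\<^sup>2 / (2 * L)))"
    by (intro sum_mono) (use tail in \<open>auto simp: bad_def\<close>)
  also have "\<dots> = 4 * (length ds + 1) * exp (- \<eta>\<^sup>2 / (2 * L))"
    by (simp add: card_cartesian_product card_unit_dirs)
  finally show ?thesis .
qed

lemma prob_not_tracks3_le:
  fixes \<eta> L :: real
  assumes p: "0 \<le> p" "p \<le> 1" and units: "set P1 \<subseteq> unit_dirs" "set R \<subseteq> unit_dirs" "set P3 \<subseteq> unit_dirs"
    and "0 < \<eta>" "0 < L" and len: "length P1 + length R + length P3 \<le> L"
  shows "measure_pmf.prob (incr_pmf p P1) {a. \<not> tracks (1 - p) \<eta> P1 a}
      + measure_pmf.prob (incr_pmf p R) {b. \<not> tracks (1 - p) \<eta> R b}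
      + measure_pmf.prob (incr_pmf p P3) {c. \<not> tracks (1 - p) \<eta> P3 c}
      \<le> (4 * L + 12) * exp (- \<eta>\<^sup>2 / (2 * L))"
proof -
  define e where "e = exp (- \<eta>\<^sup>2 / (2 * L))"
  have "length P1 \<le> L" "length R \<le> L" "length P3 \<le> L"
    using len by linarith+
  note bad = prob_not_tracks_le[OF p _ \<open>0 < \<eta>\<close> \<open>0 < L\<close>, folded e_def]
  have "real (length P1 + length R + length P3) * e \<le> L * e"
    using len by (intro mult_right_mono) (simp_all add: e_def)
  then show ?thesis
    using bad[OF units(1) \<open>length P1 \<le> L\<close>] bad[OF units(2) \<open>length R \<le> L\<close>]
      bad[OF units(3) \<open>length P3 \<le> L\<close>]
    unfolding e_def[symmetric] by (simp add: algebra_simps)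
qed

section \<open>Crossing lattice paths\<close>

lemma int_walk_passage:
  fixes u :: "nat \<Rightarrow> int"
  assumes steps: "\<forall>k<n. \<bar>u (Suc k) - u k\<bar> \<le> 1" and "u 0 \<le> lo" "lo \<le> hi" "hi \<le> u n"
  obtains k0 k1 where "k0 \<le> k1" "k1 \<le> n" "u k0 = lo" "u k1 = hi"
    "\<And>k. k0 \<le> k \<Longrightarrow> k \<le> k1 \<Longrightarrow> lo \<le> u k \<and> u k \<le> hi"
proof -
  define k1 where "k1 = (LEAST k. hi \<le> u k)"
  have k1: "hi \<le> u k1" "k1 \<le> n"
    unfolding k1_def using assms by (auto intro: LeastI Least_le)
  have below: "u k < hi" if "k < k1" for k
    using not_less_Least[of k "\<lambda>k. hi \<le> u k"] that unfolding k1_def by auto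
  have uk1: "u k1 = hi"
  proof (cases k1)
    case (Suc j)
    then have "\<bar>u (Suc j) - u j\<bar> \<le> 1" using steps k1 by auto
    with below[of j] k1 Suc show ?thesis by auto
  qed (use k1 assms in auto)
  define k0 where "k0 = Max {k. k \<le> k1 \<and> u k \<le> lo}"
  have S: "finite {k. k \<le> k1 \<and> u k \<le> lo}" "0 \<in> {k. k \<le> k1 \<and> u k \<le> lo}"
    using assms by auto
  have "k0 \<in> {k. k \<le> k1 \<and> u k \<le> lo}"
    unfolding k0_def using S by (intro Max_in) auto
  then have k0: "k0 \<le> k1" "u k0 \<le> lo" by auto
  have above: "lo < u k" if "k0 < k" "k \<le> k1" for k
  proof (rule ccontr)
    assume "\<not> lo < u k"
    then have "k \<le> k0" unfolding k0_def using that S(1) by (intro Max_ge) auto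
    with that show False by simp
  qed
  have uk0: "u k0 = lo"
  proof (cases "k0 = k1")
    case False
    then have "\<bar>u (Suc k0) - u k0\<bar> \<le> 1" using steps k0 k1 by auto
    with above[of "Suc k0"] False k0 show ?thesis by auto
  qed (use k0 uk1 assms in auto)
  show ?thesis
  proof (rule that[OF k0(1) k1(2) uk0 uk1])
    fix k assume "k0 \<le> k" "k \<le> k1"
    then show "lo \<le> u k \<and> u k \<le> hi"
      using above[of k] below[of k] uk0 uk1 by (cases "k = k0"; cases "k = k1") auto
  qed
qed

definition of_int2 :: "int \<times> int \<Rightarrow> real^2" where
  "of_int2 q = vector [real_of_int (fst q), real_of_int (snd q)]"

lemma of_int2_mem_cbox:
  "of_int2 q \<in> cbox (vector [real_of_int x0, real_of_int y0]) (vector [real_of_int x1, real_of_int y1])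
    \<longleftrightarrow> x0 \<le> fst q \<and> fst q \<le> x1 \<and> y0 \<le> snd q \<and> snd q \<le> y1"
  by (simp add: mem_box_cart forall_2 of_int2_def)

fun polygon_path :: "(nat \<Rightarrow> real^2) \<Rightarrow> nat \<Rightarrow> nat \<Rightarrow> real \<Rightarrow> real^2" where
  "polygon_path f a 0 = linepath (f a) (f a)"
| "polygon_path f a (Suc n) = linepath (f a) (f (Suc a)) +++ polygon_path f (Suc a) n"

lemma polygon_path:
  "path (polygon_path f a n)" "pathstart (polygon_path f a n) = f a"
  "pathfinish (polygon_path f a n) = f (a + n)"
  by (induction n arbitrary: a) auto

lemma path_image_polygon_path:
  "z \<in> path_image (polygon_path f a n)
    \<Longrightarrow> \<exists>i\<le>n. z \<in> closed_segment (f (a + i)) (f (a + min n (Suc i)))"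
proof (induction n arbitrary: a)
  case (Suc n)
  then have "z \<in> closed_segment (f a) (f (Suc a)) \<or> z \<in> path_image (polygon_path f (Suc a) n)"
    by (auto simp: path_image_join polygon_path)
  then show ?case
  proof
    assume "z \<in> path_image (polygon_path f (Suc a) n)"
    then obtain i where "i \<le> n" "z \<in> closed_segment (f (Suc a + i)) (f (Suc a + min n (Suc i)))"
      using Suc.IH by blast
    then show ?case by (intro exI[of _ "Suc i"]) auto
  qed (intro exI[of _ 0]; simp)
qed simp

lemma path_image_polygon_path_subset:
  assumes "convex S" "\<And>i. i \<le> n \<Longrightarrow> f (a + i) \<in> S"
  shows "path_image (polygon_path f a n) \<subseteq> S"
proof
  fix z assume "z \<in> path_image (polygon_path f a n)"
  then obtain i where "i \<le> n" "z \<in> closed_segment (f (a + i)) (f (a + min n (Suc i)))"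
    using path_image_polygon_path by blast
  with assms show "z \<in> S" by (meson closed_segment_subset min.cobounded1 subsetD)
qed

lemma closed_segment_component_bounds:
  fixes a b z :: "real^2"
  assumes "z \<in> closed_segment a b"
  shows "min (a$i) (b$i) \<le> z$i \<and> z$i \<le> max (a$i) (b$i)"
proof -
  from assms obtain u where u: "0 \<le> u" "u \<le> 1" "z = (1 - u) *\<^sub>R a + u *\<^sub>R b"
    unfolding in_segment by auto
  hence "z$i \<in> closed_segment (a$i) (b$i)"
    by (auto simp: in_segment)
  then show ?thesis by (auto simp: closed_segment_eq_real_ivl split: if_splits)
qed

lemma lattice_box_unit_step:
  fixes P P' :: "int \<times> int"
  assumes "P' - P \<in> insert 0 unit_dirs"
    "min (fst P) (fst P') \<le> x" "x \<le> max (fst P) (fst P')"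
    "min (snd P) (snd P') \<le> y" "y \<le> max (snd P) (snd P')"
  shows "(x, y) = P \<or> (x, y) = P'"
  using assms by (cases P; cases P') (auto simp: unit_dirs_def zero_prod_def)

text \<open>The lower-left corner of the intersection of the two bounding boxes is a common endpoint.\<close>
lemma lattice_segments_meet:
  fixes P P' Q Q' :: "int \<times> int"
  assumes P: "P' - P \<in> insert 0 unit_dirs" and Q: "Q' - Q \<in> insert 0 unit_dirs"
    and w: "w \<in> closed_segment (of_int2 P) (of_int2 P')" "w \<in> closed_segment (of_int2 Q) (of_int2 Q')"
  shows "P = Q \<or> P = Q' \<or> P' = Q \<or> P' = Q'"
proof -
  have c: "min (real_of_int (fst A)) (fst A') \<le> w$1 \<and> w$1 \<le> max (real_of_int (fst A)) (fst A')
      \<and> min (real_of_int (snd A)) (snd A') \<le> w$2 \<and> w$2 \<le> max (real_of_int (snd A)) (snd A')"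
    if "w \<in> closed_segment (of_int2 A) (of_int2 A')" for A A'
    using closed_segment_component_bounds[OF that, of 1] closed_segment_component_bounds[OF that, of 2]
    by (simp add: of_int2_def)
  define x where "x = max (min (fst P) (fst P')) (min (fst Q) (fst Q'))"
  define y where "y = max (min (snd P) (snd P')) (min (snd Q) (snd Q'))"
  have "real_of_int x \<le> real_of_int (min (max (fst P) (fst P')) (max (fst Q) (fst Q')))"
       "real_of_int y \<le> real_of_int (min (max (snd P) (snd P')) (max (snd Q) (snd Q')))"
    using c[OF w(1)] c[OF w(2)] unfolding x_def y_def by (simp_all add: min_def max_def split: if_splits)
  then have xy: "x \<le> min (max (fst P) (fst P')) (max (fst Q) (fst Q'))"
      "y \<le> min (max (snd P) (snd P')) (max (snd Q) (snd Q'))"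
    by linarith+
  have "(x, y) = P \<or> (x, y) = P'"
    by (rule lattice_box_unit_step[OF P]) (use xy in \<open>auto simp: x_def y_def\<close>)
  moreover have "(x, y) = Q \<or> (x, y) = Q'"
    by (rule lattice_box_unit_step[OF Q]) (use xy in \<open>auto simp: x_def y_def\<close>)
  ultimately show ?thesis by auto
qed

text \<open>A discrete form of the Fashoda meet theorem, obtained by joining consecutive lattice points
  by segments.\<close>
lemma lattice_paths_cross:
  fixes Q R :: "nat \<Rightarrow> int \<times> int" and xl xr yl yr :: int
  assumes Qs: "\<forall>m<n. Q (Suc m) - Q m \<in> unit_dirs" and Rs: "\<forall>k<n'. R (Suc k) - R k \<in> unit_dirs"
    and Qx: "fst (Q 0) \<le> xl" "xl \<le> xr" "xr \<le> fst (Q n)"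
    and Qy: "\<forall>m\<le>n. yl \<le> snd (Q m) \<and> snd (Q m) \<le> yr"
    and Ry: "snd (R 0) \<le> yl" "yl \<le> yr" "yr \<le> snd (R n')"
    and Rx: "\<forall>k\<le>n'. xl \<le> fst (R k) \<and> fst (R k) \<le> xr"
  shows "\<exists>m\<le>n. \<exists>k\<le>n'. Q m = R k"
proof -
  have "\<forall>k<n. \<bar>fst (Q (Suc k)) - fst (Q k)\<bar> \<le> 1"
    using Qs unit_dirs_abs_le by fastforce
  then obtain m0 m1 where m: "m0 \<le> m1" "m1 \<le> n" "fst (Q m0) = xl" "fst (Q m1) = xr"
    "\<And>k. m0 \<le> k \<Longrightarrow> k \<le> m1 \<Longrightarrow> xl \<le> fst (Q k) \<and> fst (Q k) \<le> xr"
    using int_walk_passage[OF _ Qx] by blast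
  have "\<forall>k<n'. \<bar>snd (R (Suc k)) - snd (R k)\<bar> \<le> 1"
    using Rs unit_dirs_abs_le by fastforce
  then obtain k0 k1 where k: "k0 \<le> k1" "k1 \<le> n'" "snd (R k0) = yl" "snd (R k1) = yr"
    "\<And>k. k0 \<le> k \<Longrightarrow> k \<le> k1 \<Longrightarrow> yl \<le> snd (R k) \<and> snd (R k) \<le> yr"
    using int_walk_passage[OF _ Ry] by blast
  define f where "f = polygon_path (\<lambda>m. of_int2 (Q m)) m0 (m1 - m0)"
  define g where "g = polygon_path (\<lambda>k. of_int2 (R k)) k0 (k1 - k0)"
  define a :: "real^2" where "a = vector [real_of_int xl, real_of_int yl]"
  define b :: "real^2" where "b = vector [real_of_int xr, real_of_int yr]"
  have "path_image f \<subseteq> cbox a b" "path_image g \<subseteq> cbox a b"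
    unfolding f_def g_def a_def b_def
    by (intro path_image_polygon_path_subset convex_box; use m k Qy Rx in \<open>simp add: of_int2_mem_cbox\<close>)+
  then obtain z where z: "z \<in> path_image f" "z \<in> path_image g"
  proof (rule fashoda[of f g, rotated 2])
    show "path f" "path g" unfolding f_def g_def by (simp_all add: polygon_path)
    show "pathstart f $ 1 = a $ 1" "pathfinish f $ 1 = b $ 1"
         "pathstart g $ 2 = a $ 2" "pathfinish g $ 2 = b $ 2"
      using m k by (simp_all add: f_def g_def a_def b_def of_int2_def polygon_path)
  qed
  obtain i where i: "i \<le> m1 - m0"
    "z \<in> closed_segment (of_int2 (Q (m0 + i))) (of_int2 (Q (m0 + min (m1 - m0) (Suc i))))"
    using z(1) path_image_polygon_path unfolding f_def by blast
  obtain j where j: "j \<le> k1 - k0"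
    "z \<in> closed_segment (of_int2 (R (k0 + j))) (of_int2 (R (k0 + min (k1 - k0) (Suc j))))"
    using z(2) path_image_polygon_path unfolding g_def by blast
  have "Q (m0 + min (m1 - m0) (Suc i)) - Q (m0 + i) \<in> insert 0 unit_dirs"
  proof (cases "i = m1 - m0")
    case False
    then have "m0 + min (m1 - m0) (Suc i) = Suc (m0 + i)" "m0 + i < n" using i(1) m by auto
    then show ?thesis using Qs by auto
  qed simp
  moreover have "R (k0 + min (k1 - k0) (Suc j)) - R (k0 + j) \<in> insert 0 unit_dirs"
  proof (cases "j = k1 - k0")
    case False
    then have "k0 + min (k1 - k0) (Suc j) = Suc (k0 + j)" "k0 + j < n'" using j(1) k by auto
    then show ?thesis using Rs by auto
  qed simp
  ultimately have "Q (m0 + i) = R (k0 + j) \<or> Q (m0 + i) = R (k0 + min (k1 - k0) (Suc j))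
      \<or> Q (m0 + min (m1 - m0) (Suc i)) = R (k0 + j)
      \<or> Q (m0 + min (m1 - m0) (Suc i)) = R (k0 + min (k1 - k0) (Suc j))"
    using lattice_segments_meet[OF _ _ i(2) j(2)] by blast
  moreover have "m0 + i \<le> n" "m0 + min (m1 - m0) (Suc i) \<le> n"
    "k0 + j \<le> n'" "k0 + min (k1 - k0) (Suc j) \<le> n'"
    using i(1) j(1) m(1,2) k(1,2) by auto
  ultimately show ?thesis by blast
qed

lemma lattice_path_meets_walk:
  fixes Q :: "nat \<Rightarrow> int \<times> int" and D :: "int \<times> int" and r :: "(int \<times> int) list"
  assumes Qs: "\<forall>m<n. Q (Suc m) - Q m \<in> unit_dirs" and r: "set r \<subseteq> unit_dirs"
    and Qx: "fst (Q 0) \<le> fst D - length r" "fst D + length r \<le> fst (Q n)"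
    and Qy: "\<forall>m\<le>n. snd D - snd (sum_list r) \<le> snd (Q m) \<and> snd (Q m) \<le> snd D"
  shows "\<exists>m\<le>n. \<exists>z\<le>length r. Q m + sum_list (take z r) = D"
proof -
  define R where "R k = D - sum_list (take (length r - k) r)" for k
  have "\<exists>m\<le>n. \<exists>k\<le>length r. Q m = R k"
  proof (rule lattice_paths_cross[OF Qs _ Qx(1) _ Qx(2) Qy])
    show "\<forall>k<length r. R (Suc k) - R k \<in> unit_dirs"
    proof (intro allI impI)
      fix k assume "k < length r"
      then have "length r - k = Suc (length r - Suc k)" "length r - Suc k < length r" by auto
      then have "R (Suc k) - R k = r ! (length r - Suc k)"
        using sum_list_take_Suc_diff[of "length r - Suc k" r] by (simp add: R_def)
      then show "R (Suc k) - R k \<in> unit_dirs"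
        using r \<open>length r - Suc k < length r\<close> by auto
    qed
    show "\<forall>k\<le>length r. fst D - length r \<le> fst (R k) \<and> fst (R k) \<le> fst D + length r"
    proof (intro allI impI)
      fix k
      have "set (take (length r - k) r) \<subseteq> unit_dirs"
        using r by (meson order.trans set_take_subset)
      then have "\<bar>fst (sum_list (take (length r - k) r))\<bar> \<le> int (length r)"
        using abs_fst_sum_list_le by fastforce
      then show "fst D - length r \<le> fst (R k) \<and> fst (R k) \<le> fst D + length r"
        by (simp add: R_def abs_le_iff)
    qed
    show "snd (R 0) \<le> snd D - snd (sum_list r)" "snd D \<le> snd (R (length r))"
      "fst D - int (length r) \<le> fst D + int (length r)"
      by (simp_all add: R_def)
    show "snd D - snd (sum_list r) \<le> snd D"
      using Qy by fastforce
  qed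
  then obtain m k where "m \<le> n" "k \<le> length r" "Q m = R k" by blast
  then show ?thesis
    by (intro exI[of _ m] conjI exI[of _ "length r - k"]) (auto simp: R_def)
qed

section \<open>The sweep\<close>

definition sweep_line :: "nat \<Rightarrow> nat \<Rightarrow> nat \<Rightarrow> nat \<Rightarrow> (int \<times> int) list" where
  "sweep_line N W G i = replicate (2 * W) (if even i then (1, 0) else (-1, 0))
     @ (if i + 1 < N then replicate G (0, 1) else [])"

definition sweep_lines :: "nat \<Rightarrow> nat \<Rightarrow> nat \<Rightarrow> (int \<times> int) list" where
  "sweep_lines N W G = concat (map (sweep_line N W G) [0..<N])"

lemma set_sweep_lines: "set (sweep_lines N W G) \<subseteq> unit_dirs"
  by (auto simp: sweep_lines_def sweep_line_def unit_dirs_def split: if_splits)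

lemma length_sweep_lines_le: "length (sweep_lines N W G) \<le> N * (2 * W + G)"
proof -
  have "length (sweep_lines N W G) = (\<Sum>i\<leftarrow>[0..<N]. length (sweep_line N W G i))"
    by (simp add: sweep_lines_def length_concat comp_def)
  also have "\<dots> \<le> (\<Sum>i\<leftarrow>[0..<N]. 2 * W + G)"
    by (intro sum_list_mono) (simp add: sweep_line_def)
  finally show ?thesis by (simp add: sum_list_triv)
qed

lemma sweep_lines_before:
  "i < N \<Longrightarrow> length (concat (map (sweep_line N W G) [0..<i])) = i * (2 * W + G)
    \<and> sum_list (concat (map (sweep_line N W G) [0..<i])) = (if odd i then int (2 * W) else 0, int (i * G))"
proof (induction i)
  case (Suc i)
  then have "sweep_line N W G i = replicate (2 * W) (if even i then (1, 0) else (-1, 0)) @ replicate G (0, 1)"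
    by (simp add: sweep_line_def)
  with Suc show ?case by (auto simp: sum_list_replicate_pair algebra_simps)
qed (simp add: zero_prod_def)

lemma sweep_lines_prefix:
  assumes "i < N" "m \<le> 2 * W"
  shows "i * (2 * W + G) + m \<le> length (sweep_lines N W G)"
    and "sum_list (take (i * (2 * W + G) + m) (sweep_lines N W G))
           = (int (if even i then m else 2 * W - m), int (i * G))"
proof -
  have "[0..<N] = [0..<i] @ i # [Suc i..<N]"
    using assms(1) by (metis le_add1 less_imp_le_nat upt_add_eq_append upt_conv_Cons add_0 le_add_diff_inverse)
  then have split: "sweep_lines N W G = concat (map (sweep_line N W G) [0..<i]) @ sweep_line N W G i
      @ concat (map (sweep_line N W G) [Suc i..<N])"
    by (simp add: sweep_lines_def)
  show "i * (2 * W + G) + m \<le> length (sweep_lines N W G)"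
    using conjunct1[OF sweep_lines_before[OF assms(1)]] assms(2) by (simp add: split sweep_line_def)
  have "take (i * (2 * W + G) + m) (sweep_lines N W G)
      = concat (map (sweep_line N W G) [0..<i]) @ replicate m (if even i then (1, 0) else (-1, 0))"
    using conjunct1[OF sweep_lines_before[OF assms(1)]] assms(2) by (simp add: split sweep_line_def)
  then show "sum_list (take (i * (2 * W + G) + m) (sweep_lines N W G))
      = (int (if even i then m else 2 * W - m), int (i * G))"
    using conjunct2[OF sweep_lines_before[OF assms(1)]] assms(2) by (auto simp: sum_list_replicate_pair of_nat_diff)
qed

lemma phase_instr_decomp:
  assumes "z \<le> sweep_G p0 t + sweep_c t"
  shows "\<exists>T. phase_instr p0 A B t z =
     (replicate (sweep_W p0 A t) (-1, 0) @ replicate (sweep_H p0 B t) (0, -1))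
     @ take z (replicate (sweep_G p0 t + sweep_c t) (0, 1))
     @ sweep_lines (sweep_N p0 B t) (sweep_W p0 A t) (sweep_G p0 t) @ T"
  using assms unfolding phase_instr_def Let_def sweep_lines_def sweep_line_def
  by (simp add: min_def)

lemma exists_grid_level:
  fixes a lo hi :: real and N :: nat
  assumes "0 < a" "0 \<le> lo" "lo + a \<le> hi" "hi \<le> a * N"
  obtains i :: nat where "i < N" "lo \<le> a * i" "a * i \<le> hi"
proof -
  define i where "i = nat \<lceil>lo / a\<rceil>"
  have "real i = real_of_int \<lceil>lo / a\<rceil>"
    using assms by (simp add: i_def)
  then have "lo / a \<le> real i" "real i < lo / a + 1"
    by linarith+
  then have "lo \<le> a * i" "a * i < lo + a"
    using assms(1) by (simp_all add: field_simps)
  moreover from this have "a * i < a * N"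
    using assms by linarith
  then have "i < N"
    using assms(1) by simp
  ultimately show ?thesis using assms that by simp
qed

lemma noisy_sweep_line_crossing:
  fixes \<mu> \<eta> :: real
  assumes e3: "tracks \<mu> \<eta> (sweep_lines N W G) e3" "length e3 = length (sweep_lines N W G)"
      "set e3 \<subseteq> unit_dirs"
    and i: "i < N"
  obtains Q :: "nat \<Rightarrow> int \<times> int" where
    "\<forall>m<2 * W. Q (Suc m) - Q m \<in> unit_dirs"
    "\<forall>m\<le>2 * W. \<bar>real_of_int (fst (Q m)) - \<mu> * m\<bar> < \<eta> \<and> \<bar>real_of_int (snd (Q m)) - \<mu> * real (i * G)\<bar> < \<eta>"
    "\<forall>m\<le>2 * W. \<exists>j\<le>length e3. Q m = sum_list (take j e3)"
proof -
  define jf where "jf m = i * (2 * W + G) + (if even i then m else 2 * W - m)" for m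
  define Q where "Q m = sum_list (take (jf m) e3)" for m
  have jf: "jf m \<le> length e3" "sum_list (take (jf m) (sweep_lines N W G)) = (int m, int (i * G))"
    if "m \<le> 2 * W" for m
    using sweep_lines_prefix[OF i, of "if even i then m else 2 * W - m" W G] that e3(2)
    by (auto simp: jf_def)
  have "Q (Suc m) - Q m \<in> unit_dirs" if "m < 2 * W" for m
  proof (cases "even i")
    case True
    then have "jf (Suc m) = Suc (jf m)" "jf m < length e3"
      using jf(1)[of "Suc m"] that by (auto simp: jf_def)
    then show ?thesis
      using e3(3) by (auto simp: Q_def sum_list_take_Suc_diff)
  next
    case False
    then have "jf m = Suc (jf (Suc m))" "jf (Suc m) < length e3"
      using jf(1)[of m] that by (auto simp: jf_def)
    then have "Q m - Q (Suc m) = e3 ! jf (Suc m)"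
      using sum_list_take_Suc_diff[of "jf (Suc m)" e3] by (simp add: Q_def)
    then have "Q (Suc m) - Q m = - (e3 ! jf (Suc m))"
      by (metis minus_diff_eq)
    then show ?thesis
      using e3(3) \<open>jf (Suc m) < length e3\<close> by (auto intro!: unit_dirs_uminus)
  qed
  moreover have "\<bar>real_of_int (fst (Q m)) - \<mu> * m\<bar> < \<eta> \<and> \<bar>real_of_int (snd (Q m)) - \<mu> * real (i * G)\<bar> < \<eta>"
    if "m \<le> 2 * W" for m
    using tracksD[OF e3(1), of "jf m"] jf[OF that] e3(2) by (simp add: Q_def)
  moreover have "\<exists>j\<le>length e3. Q m = sum_list (take j e3)" if "m \<le> 2 * W" for m
    using jf(1)[OF that] by (auto simp: Q_def)
  ultimately show ?thesis using that by blast
qed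

lemma noisy_sweep_crosses_band:
  fixes \<mu> \<eta> lo hi :: real
  assumes e3: "tracks \<mu> \<eta> (sweep_lines N W G) e3" "length e3 = length (sweep_lines N W G)"
      "set e3 \<subseteq> unit_dirs"
    and "0 < \<mu> * G" "0 \<le> lo + \<eta>" "lo + \<mu> * G + 2 * \<eta> \<le> hi" "hi - \<eta> \<le> \<mu> * G * N"
  obtains Q :: "nat \<Rightarrow> int \<times> int" where
    "\<forall>m<2 * W. Q (Suc m) - Q m \<in> unit_dirs"
    "\<forall>m\<le>2 * W. \<bar>real_of_int (fst (Q m)) - \<mu> * m\<bar> < \<eta> \<and> lo < real_of_int (snd (Q m)) \<and> real_of_int (snd (Q m)) < hi"
    "\<forall>m\<le>2 * W. \<exists>j\<le>length e3. Q m = sum_list (take j e3)"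
proof -
  have "0 \<le> lo + \<eta>" "lo + \<eta> + \<mu> * G \<le> hi - \<eta>" "hi - \<eta> \<le> \<mu> * G * N"
    using assms by linarith+
  then obtain i where i: "i < N" "lo + \<eta> \<le> \<mu> * G * i" "\<mu> * G * i \<le> hi - \<eta>"
    by (rule exists_grid_level[OF \<open>0 < \<mu> * G\<close>])
  obtain Q where Q: "\<forall>m<2 * W. Q (Suc m) - Q m \<in> unit_dirs"
    "\<forall>m\<le>2 * W. \<bar>real_of_int (fst (Q m)) - \<mu> * m\<bar> < \<eta> \<and> \<bar>real_of_int (snd (Q m)) - \<mu> * real (i * G)\<bar> < \<eta>"
    "\<forall>m\<le>2 * W. \<exists>j\<le>length e3. Q m = sum_list (take j e3)"
    by (rule noisy_sweep_line_crossing[OF e3 i(1)])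
  have "lo < real_of_int (snd (Q m))" "real_of_int (snd (Q m)) < hi" if "m \<le> 2 * W" for m
  proof -
    have "\<bar>real_of_int (snd (Q m)) - \<mu> * G * i\<bar> < \<eta>"
      using Q(2) that by (simp add: algebra_simps)
    with i(2,3) show "lo < real_of_int (snd (Q m))" "real_of_int (snd (Q m)) < hi"
      by linarith+
  qed
  with Q show ?thesis by (intro that) auto
qed

lemma visits_prefixes:
  assumes "y + sum_list e1 + sum_list (take z r) + sum_list (take j e3) = h" "z \<le> length r" "j \<le> length e3"
  shows "visits y h (e1 @ take z r @ e3)"
  unfolding visits_def
  by (rule exI[of _ "length e1 + z + j"]) (use assms in \<open>auto simp: algebra_simps min_def\<close>)

text \<open>The noisy climb of the \<open>M\<close> extra steps, run backwards from \<open>h\<close>, crosses vertically a box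
  that a suitable noisy sweep line crosses horizontally; their meeting point gives the shift \<open>z\<close>.\<close>
lemma noisy_sweep_visits:
  fixes W H G N M :: nat and \<mu> \<eta> :: real and y h :: "int \<times> int"
  assumes e1: "tracks \<mu> \<eta> (replicate W (-1, 0) @ replicate H (0, -1)) e1" "length e1 = W + H"
    and r: "tracks \<mu> \<eta> (replicate M (0, 1)) r" "length r = M" "set r \<subseteq> unit_dirs"
    and e3: "tracks \<mu> \<eta> (sweep_lines N W G) e3" "length e3 = length (sweep_lines N W G)"
      "set e3 \<subseteq> unit_dirs"
    and \<mu>: "0 < \<mu>" and G: "0 < G" "G \<le> M" "3 * \<eta> \<le> \<mu> * (real M - real G)" and N: "2 * H \<le> N * G"
    and room_y: "\<bar>real_of_int (snd h)\<bar> + \<bar>real_of_int (snd y)\<bar> + \<mu> * M \<le> \<mu> * H"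
    and room_x: "\<bar>real_of_int (fst h)\<bar> + \<bar>real_of_int (fst y)\<bar> + 2 * \<eta> + M \<le> \<mu> * W"
  shows "\<exists>z\<le>M. visits y h (e1 @ take z r @ e3)"
proof -
  define D where "D = h - (y + sum_list e1)"
  have "sum_list (replicate W (-1, 0) @ replicate H (0, -1)) = (- int W, - int H)"
    by (simp add: sum_list_replicate_pair)
  then have Dx: "\<bar>real_of_int (fst D) - (real_of_int (fst h) - real_of_int (fst y) + \<mu> * W)\<bar> < \<eta>"
    and Dy: "\<bar>real_of_int (snd D) - (real_of_int (snd h) - real_of_int (snd y) + \<mu> * H)\<bar> < \<eta>"
    using tracksD[OF e1(1), of "W + H"] e1(2) by (simp_all add: D_def algebra_simps)
  have "sum_list (replicate M ((0, 1) :: int \<times> int)) = (0, int M)"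
    by (simp add: sum_list_replicate_pair)
  then have climb: "\<mu> * M - \<eta> < real_of_int (snd (sum_list r))"
    using tracksD(2)[OF r(1), of M] r(2) by simp
  have \<eta>: "0 < \<eta>" by (rule tracks_pos[OF r(1)])
  have "- \<bar>real_of_int (snd h)\<bar> \<le> real_of_int (snd h)" "real_of_int (snd h) \<le> \<bar>real_of_int (snd h)\<bar>"
    "- \<bar>real_of_int (snd y)\<bar> \<le> real_of_int (snd y)" "real_of_int (snd y) \<le> \<bar>real_of_int (snd y)\<bar>"
    by linarith+
  moreover have "2 * real H \<le> real N * real G"
    using N by (metis of_nat_le_iff of_nat_mult of_nat_numeral)
  then have "2 * (\<mu> * H) \<le> \<mu> * G * N"
    using \<mu> by (simp add: mult_left_mono algebra_simps)
  moreover have "\<mu> * M - \<mu> * G = \<mu> * (real M - real G)" "0 < \<mu> * G" "0 \<le> \<mu> * M"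
    using \<mu> G by (simp_all add: algebra_simps)
  ultimately have "0 \<le> real_of_int (snd D) - \<mu> * M + \<eta> + \<eta>"
    "real_of_int (snd D) - \<mu> * M + \<eta> + \<mu> * G + 2 * \<eta> \<le> real_of_int (snd D)"
    "real_of_int (snd D) - \<eta> \<le> \<mu> * G * N"
    using Dy room_y G(3) \<eta> by linarith+
  then obtain Q where Q: "\<forall>m<2 * W. Q (Suc m) - Q m \<in> unit_dirs"
    "\<forall>m\<le>2 * W. \<bar>real_of_int (fst (Q m)) - \<mu> * m\<bar> < \<eta>
       \<and> real_of_int (snd D) - \<mu> * M + \<eta> < real_of_int (snd (Q m))
       \<and> real_of_int (snd (Q m)) < real_of_int (snd D)"
    "\<forall>m\<le>2 * W. \<exists>j\<le>length e3. Q m = sum_list (take j e3)"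
    by (rule noisy_sweep_crosses_band[OF e3 \<open>0 < \<mu> * G\<close>])
  have "- \<bar>real_of_int (fst h)\<bar> \<le> real_of_int (fst h)" "real_of_int (fst h) \<le> \<bar>real_of_int (fst h)\<bar>"
    "- \<bar>real_of_int (fst y)\<bar> \<le> real_of_int (fst y)" "real_of_int (fst y) \<le> \<bar>real_of_int (fst y)\<bar>"
    by linarith+
  then have Dx': "\<eta> + M \<le> real_of_int (fst D)" "real_of_int (fst D) + \<eta> + M \<le> 2 * \<mu> * W"
    using Dx room_x by linarith+
  have "real_of_int (fst (Q 0)) < \<eta>" "2 * \<mu> * W - \<eta> < real_of_int (fst (Q (2 * W)))"
    using Q(2)[rule_format, of 0] Q(2)[rule_format, of "2 * W"] by (auto simp: abs_less_iff algebra_simps)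
  with Dx' r(2) have "fst (Q 0) \<le> fst D - length r" "fst D + length r \<le> fst (Q (2 * W))"
    by linarith+
  moreover have "\<forall>m\<le>2 * W. snd D - snd (sum_list r) \<le> snd (Q m) \<and> snd (Q m) \<le> snd D"
  proof (intro allI impI conjI)
    fix m assume "m \<le> 2 * W"
    then have "real_of_int (snd D) - \<mu> * M + \<eta> < real_of_int (snd (Q m))"
      "real_of_int (snd (Q m)) < real_of_int (snd D)"
      using Q(2) by auto
    with climb show "snd D - snd (sum_list r) \<le> snd (Q m)" "snd (Q m) \<le> snd D"
      by linarith+
  qed
  ultimately obtain m z where "m \<le> 2 * W" "z \<le> M" "Q m + sum_list (take z r) = D"
    using lattice_path_meets_walk[OF Q(1) r(3)] r(2) by blast
  moreover from this obtain j where j: "j \<le> length e3" "Q m = sum_list (take j e3)"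
    using Q(3) by blast
  ultimately have "y + sum_list e1 + sum_list (take z r) + sum_list (take j e3) = h"
    by (simp add: D_def algebra_simps)
  then have "visits y h (e1 @ take z r @ e3)"
    by (rule visits_prefixes) (use r(2) j \<open>z \<le> M\<close> in auto)
  then show ?thesis using \<open>z \<le> M\<close> by blast
qed

section \<open>Probability of a visit during a phase\<close>

lemma prob_bind_pmf_of_set:
  assumes "finite S" "S \<noteq> {}"
  shows "measure_pmf.prob (bind_pmf (pmf_of_set S) f) X = (\<Sum>z\<in>S. measure_pmf.prob (f z) X) / card S"
proof -
  have "ennreal (measure_pmf.prob (bind_pmf (pmf_of_set S) f) X)
      = (\<Sum>z\<in>S. emeasure (measure_pmf (f z)) X) / of_nat (card S)"
    by (simp add: measure_pmf.emeasure_eq_measure[symmetric] nn_integral_pmf_of_set[OF assms(2,1)])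
  also have "\<dots> = ennreal ((\<Sum>z\<in>S. measure_pmf.prob (f z) X) / card S)"
    using assms by (simp add: measure_pmf.emeasure_eq_measure ennreal_of_nat_eq_real_of_nat
        divide_ennreal sum_nonneg card_gt_0_iff)
  finally show ?thesis
    by (subst (asm) ennreal_inj) (auto intro!: divide_nonneg_nonneg sum_nonneg)
qed

lemma prob_pair_pmf_fst: "measure_pmf.prob (pair_pmf A B) {\<omega>. P (fst \<omega>)} = measure_pmf.prob A {a. P a}"
  by (subst map_fst_pair_pmf[of A B, symmetric]) (simp add: vimage_def)

lemma prob_pair_pmf_snd: "measure_pmf.prob (pair_pmf A B) {\<omega>. P (snd \<omega>)} = measure_pmf.prob B {b. P b}"
  by (subst map_snd_pair_pmf[of A B, symmetric]) (simp add: vimage_def)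

lemma prob_pair_pmf3_ge:
  assumes "\<And>a b c. a \<in> set_pmf A \<Longrightarrow> b \<in> set_pmf B \<Longrightarrow> c \<in> set_pmf C
      \<Longrightarrow> P a \<Longrightarrow> Q b \<Longrightarrow> R c \<Longrightarrow> (a, b, c) \<in> E"
  shows "1 - measure_pmf.prob A {a. \<not> P a} - measure_pmf.prob B {b. \<not> Q b} - measure_pmf.prob C {c. \<not> R c}
           \<le> measure_pmf.prob (pair_pmf A (pair_pmf B C)) E"
proof -
  let ?\<Omega> = "pair_pmf A (pair_pmf B C)"
  have "measure_pmf.prob ?\<Omega> (UNIV - E)
      \<le> measure_pmf.prob ?\<Omega> ({\<omega>. \<not> P (fst \<omega>)} \<union> {\<omega>. \<not> Q (fst (snd \<omega>))} \<union> {\<omega>. \<not> R (snd (snd \<omega>))})"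
    by (subst (1 2) measure_Int_set_pmf[symmetric], rule measure_pmf.finite_measure_mono)
      (use assms in auto)
  also have "\<dots> \<le> measure_pmf.prob ?\<Omega> ({\<omega>. \<not> P (fst \<omega>)} \<union> {\<omega>. \<not> Q (fst (snd \<omega>))})
      + measure_pmf.prob ?\<Omega> {\<omega>. \<not> R (snd (snd \<omega>))}"
    by (rule measure_Un_le) auto
  also have "\<dots> \<le> measure_pmf.prob ?\<Omega> {\<omega>. \<not> P (fst \<omega>)} + measure_pmf.prob ?\<Omega> {\<omega>. \<not> Q (fst (snd \<omega>))}
      + measure_pmf.prob ?\<Omega> {\<omega>. \<not> R (snd (snd \<omega>))}"
    using measure_Un_le[of "{\<omega>. \<not> P (fst \<omega>)}" ?\<Omega> "{\<omega>. \<not> Q (fst (snd \<omega>))}"] by simp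
  also have "\<dots> = measure_pmf.prob A {a. \<not> P a} + measure_pmf.prob B {b. \<not> Q b}
      + measure_pmf.prob C {c. \<not> R c}"
    using prob_pair_pmf_fst[of A "pair_pmf B C" "\<lambda>a. \<not> P a"]
      prob_pair_pmf_snd[of A "pair_pmf B C" "\<lambda>s. \<not> Q (fst s)"]
      prob_pair_pmf_snd[of A "pair_pmf B C" "\<lambda>s. \<not> R (snd s)"]
      prob_pair_pmf_fst[of B C "\<lambda>b. \<not> Q b"] prob_pair_pmf_snd[of B C "\<lambda>c. \<not> R c"]
    by simp
  finally show ?thesis
    using measure_pmf.prob_compl[of E ?\<Omega>] by simp
qed

lemma visits_append: "visits y x u \<Longrightarrow> visits y x (u @ d)"
  unfolding visits_def by (metis le_add1 length_append order.trans take_append take_eq_Nil2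
      append_Nil2 diff_is_0_eq)

text \<open>All values of the uniform shift \<open>z\<close> are coupled by reusing the same noise.\<close>
lemma prob_visits_mixture_ge:
  assumes F: "\<And>z. z \<le> M \<Longrightarrow> \<exists>T. F z = P1 @ take z R @ P3 @ T"
  shows "measure_pmf.prob (pair_pmf (incr_pmf p P1) (pair_pmf (incr_pmf p R) (incr_pmf p P3)))
           {\<omega>. \<exists>z\<le>M. visits y h (fst \<omega> @ take z (fst (snd \<omega>)) @ snd (snd \<omega>))} / (M + 1)
         \<le> measure_pmf.prob (bind_pmf (pmf_of_set {0..M}) (\<lambda>z. incr_pmf p (F z))) {es. visits y h es}"
proof -
  define \<Omega> where "\<Omega> = pair_pmf (incr_pmf p P1) (pair_pmf (incr_pmf p R) (incr_pmf p P3))"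
  define E where "E z = {\<omega>. visits y h (fst \<omega> @ take z (fst (snd \<omega>)) @ snd (snd \<omega>))}" for z
  have E_le: "measure_pmf.prob \<Omega> (E z) \<le> measure_pmf.prob (incr_pmf p (F z)) {es. visits y h es}"
    if "z \<le> M" for z
  proof -
    obtain T where "F z = (P1 @ take z R @ P3) @ T" using F[OF \<open>z \<le> M\<close>] by auto
    then have T: "incr_pmf p (F z)
        = map_pmf (\<lambda>(a, b). a @ b) (pair_pmf (incr_pmf p (P1 @ take z R @ P3)) (incr_pmf p T))"
      by (simp only: incr_pmf_append)
    have X: "incr_pmf p (P1 @ take z R @ P3)
        = map_pmf (\<lambda>\<omega>. fst \<omega> @ take z (fst (snd \<omega>)) @ snd (snd \<omega>)) \<Omega>"
      unfolding \<Omega>_def incr_pmf_append map_pmf_take_incr_pmf[symmetric]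
      by (simp add: pair_map_pmf1 pair_map_pmf2 map_pmf_comp case_prod_beta)
    have "measure_pmf.prob \<Omega> (E z) = measure_pmf.prob (incr_pmf p (P1 @ take z R @ P3)) {u. visits y h u}"
      by (simp add: X E_def vimage_def)
    also have "\<dots> = measure_pmf.prob (pair_pmf (incr_pmf p (P1 @ take z R @ P3)) (incr_pmf p T))
        {\<omega>. visits y h (fst \<omega>)}"
      by (simp add: prob_pair_pmf_fst)
    also have "\<dots> \<le> measure_pmf.prob (pair_pmf (incr_pmf p (P1 @ take z R @ P3)) (incr_pmf p T))
        {\<omega>. visits y h (fst \<omega> @ snd \<omega>)}"
      by (intro measure_pmf.finite_measure_mono) (auto intro: visits_append)
    also have "\<dots> = measure_pmf.prob (incr_pmf p (F z)) {es. visits y h es}"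
      by (simp add: T vimage_def case_prod_beta)
    finally show ?thesis .
  qed
  have "measure_pmf.prob \<Omega> (\<Union>z\<in>{0..M}. E z) \<le> (\<Sum>z\<in>{0..M}. measure_pmf.prob \<Omega> (E z))"
    by (rule measure_pmf.finite_measure_subadditive_finite) auto
  also have "\<dots> \<le> (\<Sum>z\<in>{0..M}. measure_pmf.prob (incr_pmf p (F z)) {es. visits y h es})"
    by (intro sum_mono E_le) auto
  also have "(\<Union>z\<in>{0..M}. E z) = {\<omega>. \<exists>z\<le>M. visits y h (fst \<omega> @ take z (fst (snd \<omega>)) @ snd (snd \<omega>))}"
    by (auto simp: E_def)
  finally show ?thesis
    by (simp add: prob_bind_pmf_of_set \<Omega>_def divide_right_mono)
qed

definition sweep_eta :: "real \<Rightarrow> nat \<Rightarrow> real" where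
  "sweep_eta p t = (1 - p) * sweep_c t / 4"

definition sweep_len :: "real \<Rightarrow> real \<Rightarrow> real \<Rightarrow> nat \<Rightarrow> nat" where
  "sweep_len p0 A B t = sweep_W p0 A t + sweep_H p0 B t + (sweep_G p0 t + sweep_c t)
     + sweep_N p0 B t * (2 * sweep_W p0 A t + sweep_G p0 t)"

text \<open>Hoeffding's bound \<open>exp (- \<eta>\<^sup>2 / (2 L))\<close> summed over the \<open>4 (n + 1)\<close> prefixes and directions
  of each of the three parts of a phase.\<close>
definition sweep_delta :: "real \<Rightarrow> real \<Rightarrow> real \<Rightarrow> real \<Rightarrow> nat \<Rightarrow> real" where
  "sweep_delta p p0 A B t =
     (4 * real (sweep_len p0 A B t) + 12) * exp (- (sweep_eta p t)\<^sup>2 / (2 * real (sweep_len p0 A B t)))"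

text \<open>Margins for the deterministic argument, uniform over the starting points in the box
  \<open>[-A \<surd>t, A \<surd>t] \<times> [-B \<surd>t, B \<surd>t]\<close>.\<close>
definition sweep_room :: "real \<Rightarrow> real \<Rightarrow> real \<Rightarrow> real \<Rightarrow> int \<times> int \<Rightarrow> nat \<Rightarrow> bool" where
  "sweep_room p p0 A B h t \<longleftrightarrow> 0 < sweep_G p0 t
     \<and> \<bar>real_of_int (snd h)\<bar> + B * sqrt t + (1 - p) * (sweep_G p0 t + sweep_c t) \<le> (1 - p) * sweep_H p0 B t
     \<and> \<bar>real_of_int (fst h)\<bar> + A * sqrt t + 2 * sweep_eta p t + (sweep_G p0 t + sweep_c t)
         \<le> (1 - p) * sweep_W p0 A t"

lemma sweep_c_pos: "0 < t \<Longrightarrow> 0 < sweep_c t"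
  by (simp add: sweep_c_def)

lemma sweep_N_mult_G_ge:
  assumes "0 < sweep_G p0 t"
  shows "2 * sweep_H p0 B t \<le> sweep_N p0 B t * sweep_G p0 t"
proof -
  have "2 * real (sweep_H p0 B t) / sweep_G p0 t \<le> sweep_N p0 B t"
    unfolding sweep_N_def by (rule real_nat_ceiling_ge)
  then have "real (2 * sweep_H p0 B t) \<le> real (sweep_N p0 B t * sweep_G p0 t)"
    using assms by (simp add: divide_le_eq)
  then show ?thesis by (simp only: of_nat_le_iff)
qed

lemma phase_visit_prob_ge:
  fixes p p0 A B :: real and h y :: "int \<times> int" and t :: nat
  assumes p: "0 < p" "p < 1" and t: "0 < t" and room: "sweep_room p p0 A B h t"
    and box: "\<bar>real_of_int (fst y)\<bar> \<le> A * sqrt t" "\<bar>real_of_int (snd y)\<bar> \<le> B * sqrt t"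
  shows "(1 - sweep_delta p p0 A B t) / (sweep_G p0 t + sweep_c t + 1)
           \<le> measure_pmf.prob (phase_pmf p p0 A B t) {es. visits y h es}"
proof -
  define W where "W = sweep_W p0 A t"
  define H where "H = sweep_H p0 B t"
  define G where "G = sweep_G p0 t"
  define N where "N = sweep_N p0 B t"
  define c where "c = sweep_c t"
  define M where "M = G + c"
  define \<eta> where "\<eta> = sweep_eta p t"
  define L where "L = sweep_len p0 A B t"
  define P1 where "P1 = replicate W ((-1, 0) :: int \<times> int) @ replicate H (0, -1)"
  define R where "R = replicate M ((0, 1) :: int \<times> int)"
  define P3 where "P3 = sweep_lines N W G"
  have G: "0 < G" using room by (simp add: sweep_room_def G_def)
  have c: "0 < c" using sweep_c_pos[OF t] by (simp add: c_def)
  have \<eta>: "0 < \<eta>" using c p by (simp add: \<eta>_def c_def sweep_eta_def)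
  have len: "length P1 + length R + length P3 \<le> L"
    using length_sweep_lines_le[of N W G]
    by (simp add: P1_def R_def P3_def L_def sweep_len_def W_def H_def G_def N_def c_def M_def)
  then have L: "0 < real L" using c by (simp add: R_def M_def)
  have units: "set P1 \<subseteq> unit_dirs" "set R \<subseteq> unit_dirs" "set P3 \<subseteq> unit_dirs"
    using set_sweep_lines by (auto simp: P1_def R_def P3_def unit_dirs_mem)
  have "1 - sweep_delta p p0 A B t
      \<le> 1 - measure_pmf.prob (incr_pmf p P1) {a. \<not> tracks (1 - p) \<eta> P1 a}
          - measure_pmf.prob (incr_pmf p R) {b. \<not> tracks (1 - p) \<eta> R b}
          - measure_pmf.prob (incr_pmf p P3) {c. \<not> tracks (1 - p) \<eta> P3 c}"
    using prob_not_tracks3_le[of p P1 R P3 \<eta> L] p units \<eta> L len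
    by (simp add: sweep_delta_def L_def \<eta>_def)
  also have "\<dots> \<le> measure_pmf.prob (pair_pmf (incr_pmf p P1) (pair_pmf (incr_pmf p R) (incr_pmf p P3)))
           {\<omega>. \<exists>z\<le>M. visits y h (fst \<omega> @ take z (fst (snd \<omega>)) @ snd (snd \<omega>))}"
  proof (rule prob_pair_pmf3_ge)
    fix e1 r e3
    assume "e1 \<in> set_pmf (incr_pmf p P1)" "r \<in> set_pmf (incr_pmf p R)" "e3 \<in> set_pmf (incr_pmf p P3)"
      and tracks: "tracks (1 - p) \<eta> P1 e1" "tracks (1 - p) \<eta> R r" "tracks (1 - p) \<eta> P3 e3"
    then have "length e1 = length P1" "length r = length R" "length e3 = length P3"
      "set r \<subseteq> unit_dirs" "set e3 \<subseteq> unit_dirs"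
      using set_pmf_incr_pmf units by blast+
    then show "(e1, r, e3) \<in> {\<omega>. \<exists>z\<le>M. visits y h (fst \<omega> @ take z (fst (snd \<omega>)) @ snd (snd \<omega>))}"
      using noisy_sweep_visits[of "1 - p" \<eta> W H e1 M r N G e3 h y] tracks G c p room box
        sweep_N_mult_G_ge[of p0 t B]
      by (auto simp: P1_def R_def P3_def M_def sweep_room_def W_def H_def G_def N_def c_def \<eta>_def
          sweep_eta_def)
  qed
  finally have "(1 - sweep_delta p p0 A B t) / (M + 1)
      \<le> measure_pmf.prob (pair_pmf (incr_pmf p P1) (pair_pmf (incr_pmf p R) (incr_pmf p P3)))
           {\<omega>. \<exists>z\<le>M. visits y h (fst \<omega> @ take z (fst (snd \<omega>)) @ snd (snd \<omega>))} / (M + 1)"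
    by (simp add: divide_right_mono)
  also have "\<dots> \<le> measure_pmf.prob (bind_pmf (pmf_of_set {0..M}) (\<lambda>z. incr_pmf p (phase_instr p0 A B t z)))
      {es. visits y h es}"
    by (rule prob_visits_mixture_ge)
      (use phase_instr_decomp in \<open>simp add: P1_def R_def P3_def M_def W_def H_def G_def N_def c_def\<close>)
  also have "\<dots> = measure_pmf.prob (phase_pmf p p0 A B t) {es. visits y h es}"
    by (simp add: phase_pmf_def M_def G_def c_def)
  finally show ?thesis by (simp add: M_def G_def c_def add.assoc)
qed

section \<open>Asymptotics\<close>

lemma real_nat_ceiling_le: "0 \<le> x \<Longrightarrow> real (nat \<lceil>x\<rceil>) \<le> x + 1"
  by (simp add: of_nat_nat)

lemma sweep_bounds:
  fixes p0 A B :: real and t :: nat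
  assumes "p0 < 1" "0 \<le> A" "0 \<le> B" "2 \<le> t"
  shows "1 / (1 - p0) * A * sqrt t \<le> sweep_W p0 A t" "sweep_W p0 A t \<le> 1 / (1 - p0) * A * sqrt t + 1"
    and "1 / (1 - p0) * B * sqrt t \<le> sweep_H p0 B t" "sweep_H p0 B t \<le> 1 / (1 - p0) * B * sqrt t + 1"
    and "0 < 1 / (1 - p0) * (sqrt t / ln t)" "1 / (1 - p0) * (sqrt t / ln t) \<le> sweep_G p0 t"
      "sweep_G p0 t \<le> 1 / (1 - p0) * (sqrt t / ln t) + 1"
    and "t powr (1/3) \<le> sweep_c t" "sweep_c t \<le> t powr (1/3) + 1"
proof -
  have "0 < 1 / (1 - p0)" "0 < sqrt t" "0 < ln t"
    using assms by auto
  then show "0 < 1 / (1 - p0) * (sqrt t / ln t)" by simp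
  show "1 / (1 - p0) * A * sqrt t \<le> sweep_W p0 A t" "1 / (1 - p0) * B * sqrt t \<le> sweep_H p0 B t"
    "1 / (1 - p0) * (sqrt t / ln t) \<le> sweep_G p0 t" "t powr (1/3) \<le> sweep_c t"
    by (simp_all only: sweep_W_def sweep_H_def sweep_G_def sweep_c_def real_nat_ceiling_ge)
  show "sweep_W p0 A t \<le> 1 / (1 - p0) * A * sqrt t + 1" "sweep_H p0 B t \<le> 1 / (1 - p0) * B * sqrt t + 1"
    "sweep_G p0 t \<le> 1 / (1 - p0) * (sqrt t / ln t) + 1" "sweep_c t \<le> t powr (1/3) + 1"
    unfolding sweep_W_def sweep_H_def sweep_G_def sweep_c_def
    using \<open>0 < 1 / (1 - p0)\<close> \<open>0 < sqrt t\<close> \<open>0 < ln t\<close> assms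
    by (intro real_nat_ceiling_le; simp)+
qed

lemma sweep_room_eventually:
  assumes p: "0 < p" "p < p0" "p0 < 1" and AB: "0 < A" "0 < B"
  shows "eventually (sweep_room p p0 A B h) sequentially"
proof -
  define al \<mu> k where "al = 1 / (1 - p0)" and "\<mu> = 1 - p" and "k = \<mu> * al - 1"
  define a b where "a = \<bar>real_of_int (fst h)\<bar>" and "b = \<bar>real_of_int (snd h)\<bar>"
  have al: "0 < al" and \<mu>: "0 < \<mu>" and ab: "0 \<le> a" "0 \<le> b"
    using p by (simp_all add: al_def \<mu>_def a_def b_def)
  have k: "0 < k"
    using p by (simp add: k_def \<mu>_def al_def field_simps)
  have "eventually (\<lambda>x. b + B * sqrt x + \<mu> * (al * (sqrt x / ln x) + x powr (1/3) + 2)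
      \<le> (1 + k) * B * sqrt x) at_top"
    using k AB \<mu> al ab by real_asymp
  moreover have "eventually (\<lambda>x. a + A * sqrt x + \<mu> * (x powr (1/3) + 1) / 2
      + (al * (sqrt x / ln x) + x powr (1/3) + 2) \<le> (1 + k) * A * sqrt x) at_top"
    using k AB \<mu> al ab by real_asymp
  ultimately have "eventually (\<lambda>x. 2 \<le> x \<and> b + B * sqrt x + \<mu> * (al * (sqrt x / ln x) + x powr (1/3) + 2)
      \<le> (1 + k) * B * sqrt x \<and> a + A * sqrt x + \<mu> * (x powr (1/3) + 1) / 2
      + (al * (sqrt x / ln x) + x powr (1/3) + 2) \<le> (1 + k) * A * sqrt x) at_top"
    by (intro eventually_conj eventually_ge_at_top)
  from eventually_compose_filterlim[OF this filterlim_real_sequentially]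
  show ?thesis
  proof (rule eventually_mono)
    fix t :: nat
    assume t: "2 \<le> real t \<and> b + B * sqrt t + \<mu> * (al * (sqrt t / ln t) + t powr (1/3) + 2)
      \<le> (1 + k) * B * sqrt t \<and> a + A * sqrt t + \<mu> * (t powr (1/3) + 1) / 2
      + (al * (sqrt t / ln t) + t powr (1/3) + 2) \<le> (1 + k) * A * sqrt t"
    then have "2 \<le> t" by linarith
    note bnd = sweep_bounds[OF p(3) less_imp_le[OF AB(1)] less_imp_le[OF AB(2)] this, folded al_def]
    have "(1 + k) * B * sqrt t \<le> \<mu> * sweep_H p0 B t" "(1 + k) * A * sqrt t \<le> \<mu> * sweep_W p0 A t"
      using bnd \<mu> by (auto simp: k_def algebra_simps intro!: mult_left_mono)
    moreover have "\<mu> * (sweep_G p0 t + sweep_c t) \<le> \<mu> * (al * (sqrt t / ln t) + t powr (1/3) + 2)"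
      using bnd \<mu> by (intro mult_left_mono) auto
    moreover have "sweep_eta p t \<le> \<mu> * (t powr (1/3) + 1) / 4"
      using bnd \<mu> unfolding sweep_eta_def \<mu>_def[symmetric] by (intro divide_right_mono mult_left_mono) auto
    ultimately show "sweep_room p p0 A B h t"
      using t bnd by (simp add: sweep_room_def a_def b_def \<mu>_def)
  qed
qed

lemma mult_exp_neg_div_mono:
  fixes a a' L L' :: real
  assumes "0 \<le> a'" "a' \<le> a" "0 < L" "L \<le> L'"
  shows "(4 * L + 12) * exp (- a / (2 * L)) \<le> (4 * L' + 12) * exp (- a' / (2 * L'))"
proof (rule mult_mono)
  have "a' / (2 * L') \<le> a / (2 * L)"
    using assms by (intro frac_le) auto
  then show "exp (- a / (2 * L)) \<le> exp (- a' / (2 * L'))" by simp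
qed (use assms in auto)

lemma sweep_delta_tendsto_0:
  assumes p: "0 < p" "p < 1" "p0 < 1" and AB: "0 < A" "0 < B"
  shows "sweep_delta p p0 A B \<longlonglongrightarrow> 0"
proof -
  define al \<mu> where "al = 1 / (1 - p0)" and "\<mu> = 1 - p"
  have al: "0 < al" and \<mu>: "0 < \<mu>"
    using p by (simp_all add: al_def \<mu>_def)
  define Lr where "Lr x = (al * A * sqrt x + 1) + (al * B * sqrt x + 1) + (al * (sqrt x / ln x) + 1)
    + (x powr (1/3) + 1) + (2 * (al * B * sqrt x + 1) / (al * (sqrt x / ln x)) + 1)
      * (2 * (al * A * sqrt x + 1) + al * (sqrt x / ln x) + 1)" for x :: real
  define f where "f x = (4 * Lr x + 12) * exp (- (\<mu> * x powr (1/3) / 4)\<^sup>2 / (2 * Lr x))" for x :: real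
  have "(f \<longlongrightarrow> 0) at_top"
    unfolding f_def Lr_def using al \<mu> AB by real_asymp
  then have lim: "(\<lambda>t. f (real t)) \<longlonglongrightarrow> 0"
    by (rule filterlim_compose[OF _ filterlim_real_sequentially])
  have "0 \<le> sweep_delta p p0 A B t \<and> sweep_delta p p0 A B t \<le> f t" if "2 \<le> t" for t :: nat
  proof -
    note bnd = sweep_bounds[OF p(3) less_imp_le[OF AB(1)] less_imp_le[OF AB(2)] that, folded al_def]
    have "real (sweep_N p0 B t) \<le> 2 * (al * B * sqrt t + 1) / (al * (sqrt t / ln t)) + 1"
    proof -
      have "real (sweep_N p0 B t) \<le> 2 * real (sweep_H p0 B t) / sweep_G p0 t + 1"
        unfolding sweep_N_def by (rule real_nat_ceiling_le) simp
      also have "\<dots> \<le> 2 * (al * B * sqrt t + 1) / (al * (sqrt t / ln t)) + 1"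
        using bnd by (intro add_right_mono frac_le) auto
      finally show ?thesis .
    qed
    moreover have "2 * real (sweep_W p0 A t) + sweep_G p0 t
        \<le> 2 * (al * A * sqrt t + 1) + al * (sqrt t / ln t) + 1"
      using bnd(2,7) by (simp add: algebra_simps)
    moreover have "0 \<le> 2 * (al * B * sqrt t + 1) / (al * (sqrt t / ln t))"
      using bnd(5) al AB by (intro divide_nonneg_pos) auto
    ultimately have "real (sweep_N p0 B t) * (2 * real (sweep_W p0 A t) + sweep_G p0 t)
        \<le> (2 * (al * B * sqrt t + 1) / (al * (sqrt t / ln t)) + 1) * (2 * (al * A * sqrt t + 1) + al * (sqrt t / ln t) + 1)"
      by (auto intro!: mult_mono)
    then have "real (sweep_len p0 A B t) \<le> Lr t"
      unfolding sweep_len_def Lr_def using bnd by simp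
    moreover have "\<mu> * t powr (1/3) / 4 \<le> sweep_eta p t"
      using bnd \<mu> unfolding sweep_eta_def \<mu>_def[symmetric] by (intro divide_right_mono mult_left_mono) auto
    moreover have "0 < real (sweep_len p0 A B t)"
      using sweep_c_pos[of t] that unfolding of_nat_0_less_iff by (simp add: sweep_len_def)
    ultimately show ?thesis
      unfolding sweep_delta_def f_def using \<mu>
      by (intro conjI mult_exp_neg_div_mono power_mono) auto
  qed
  then show ?thesis
    by (intro tendsto_sandwich[OF _ _ tendsto_const lim]) (auto simp: eventually_sequentially)
qed

lemma sweep_G_fraction_tendsto_1:
  assumes "p0 < 1"
  shows "(\<lambda>t. sweep_G p0 t / (sweep_G p0 t + sweep_c t + 1)) \<longlonglongrightarrow> 1"
proof -
  define al where "al = 1 / (1 - p0)"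
  have al: "0 < al" using assms by (simp add: al_def)
  have "((\<lambda>x. 1 - (x powr (1/3) + 2) / (al * (sqrt x / ln x))) \<longlongrightarrow> 1) at_top"
    using al by real_asymp
  then have lim: "(\<lambda>t. 1 - (real t powr (1/3) + 2) / (al * (sqrt t / ln t))) \<longlonglongrightarrow> 1"
    by (rule filterlim_compose[OF _ filterlim_real_sequentially])
  have "1 - (real t powr (1/3) + 2) / (al * (sqrt t / ln t)) \<le> sweep_G p0 t / (sweep_G p0 t + sweep_c t + 1)
    \<and> sweep_G p0 t / (sweep_G p0 t + sweep_c t + 1) \<le> 1" if "2 \<le> t" for t :: nat
  proof -
    note bnd = sweep_bounds[OF assms order_refl order_refl that, folded al_def]
    have "sweep_G p0 t / (sweep_G p0 t + sweep_c t + 1) = 1 - (sweep_c t + 1) / (sweep_G p0 t + sweep_c t + 1)"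
      by (simp add: field_simps)
    moreover have "(sweep_c t + 1) / (sweep_G p0 t + sweep_c t + 1) \<le> (real t powr (1/3) + 2) / (al * (sqrt t / ln t))"
      using bnd by (intro frac_le) auto
    moreover have "0 \<le> (sweep_c t + 1) / (sweep_G p0 t + sweep_c t + 1)"
      by simp
    ultimately show ?thesis by linarith
  qed
  then show ?thesis
    by (intro tendsto_sandwich[OF _ _ lim tendsto_const]) (auto simp: eventually_sequentially)
qed

theorem proposition7:
  fixes p p0 A B :: real and x_home :: "int \<times> int"
  assumes "0 < p" and "p < p0" and "p0 < 1" and "A > 0" and "B > 0"
  shows "\<exists>\<epsilon> :: nat \<Rightarrow> real. \<epsilon> \<longlonglongrightarrow> 0 \<and>
    (\<forall>t :: nat. t > 0 \<longrightarrow> (\<forall>y :: int \<times> int.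
        \<bar>real_of_int (fst y)\<bar> \<le> A * sqrt (real t) \<and> \<bar>real_of_int (snd y)\<bar> \<le> B * sqrt (real t) \<longrightarrow>
        measure_pmf.prob (phase_pmf p p0 A B t) {es. visits y x_home es}
          \<ge> (1 - \<epsilon> t) / real (sweep_G p0 t)))"
proof -
  have p: "0 < p" "p < 1" "p0 < 1" using assms by simp_all
  define q where "q t = sweep_G p0 t / (sweep_G p0 t + sweep_c t + 1)" for t
  define \<epsilon> where "\<epsilon> t = (if sweep_room p p0 A B x_home t then 1 - (1 - sweep_delta p p0 A B t) * q t else 1)"
    for t
  have "(\<lambda>t. 1 - (1 - sweep_delta p p0 A B t) * q t) \<longlonglongrightarrow> 1 - (1 - 0) * 1"
    unfolding q_def using sweep_delta_tendsto_0[OF p assms(4,5)] sweep_G_fraction_tendsto_1[OF p(3)]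
    by (intro tendsto_intros)
  moreover have "\<forall>\<^sub>F t in sequentially. 1 - (1 - sweep_delta p p0 A B t) * q t = \<epsilon> t"
    using sweep_room_eventually[OF assms, of x_home] by (rule eventually_mono) (simp add: \<epsilon>_def)
  ultimately have "\<epsilon> \<longlonglongrightarrow> 0" by (simp add: Lim_transform_eventually)
  moreover have "(1 - \<epsilon> t) / sweep_G p0 t \<le> measure_pmf.prob (phase_pmf p p0 A B t) {es. visits y x_home es}"
    if "0 < t" "\<bar>real_of_int (fst y)\<bar> \<le> A * sqrt t" "\<bar>real_of_int (snd y)\<bar> \<le> B * sqrt t" for t y
  proof (cases "sweep_room p p0 A B x_home t")
    case True
    then have "(1 - \<epsilon> t) / sweep_G p0 t = (1 - sweep_delta p p0 A B t) / (sweep_G p0 t + sweep_c t + 1)"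
      by (simp add: \<epsilon>_def q_def sweep_room_def)
    with phase_visit_prob_ge[OF p(1,2) that(1) True that(2,3)] show ?thesis by simp
  qed (simp add: \<epsilon>_def)
  ultimately show ?thesis by blast
qed

end
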